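(* Consider the planar Problem B with $w=e=(0,1)$ (see context). If $(\rho,C_r,C_b,\varphi)$ is a local solution on $[-\delta,\delta]$, let $\rho_0=\rho(0)$ and $d_0=d_r(0)\,(=d_b(0))$ and $k_0=\rho_0/d_0$. Then $$k_0\le\frac{(\Delta_r-\Delta_b)^2}{4\Delta_r\Delta_b},\qquad \Delta_r=\frac{n_r}{n_r-1},\ \Delta_b=\frac{n_b}{n_b-1}.$$ In other words, if $k_0>\frac{(\Delta_r-\Delta_b)^2}{4\Delta_r\Delta_b}$ there is no local solution with these values of $\rho(0)$ and $d_r(0)$.
   Context: Planar setting: $x(t)=(\sin t,\cos t)$, $e=(0,1)$; refractive indices $n_b>n_r>1$, outside vacuum; $\Phi_\kappa(s)=s-\sqrt{\kappa^2-1+s^2}$. For positive $\rho\in C^2$, the curve $\rho(t)x(t)$ has outer unit normal $\nu_\rho(t)=\dfrac{(\rho\sin t-\rho'\cos t,\ \rho'\sin t+\rho\cos t)}{\sqrt{\rho^2+\rho'^2}}$. For $c\in\{r,b\}$ and a constant $C_c$: $m_c(t)=\frac1{n_c}\big(x(t)-\Phi_{n_c}(x(t)\cdot\nu_\rho(t))\nu_\rho(t)\big)$, $d_c(t)=\dfrac{C_c-\rho(t)(1-\cos t)}{n_c-e\cdot m_c(t)}$, $f_c(t)=\rho(t)x(t)+d_c(t)m_c(t)$; the curve $f_c$ refracts the color-$c$ ray $m_c(t)$ at $f_c(t)$ into $e$ by Snell's law. A local solution of Problem B: $\delta\in(0,\pi/2)$, positive $\rho\in C^2[-\delta,\delta]$,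 constants $C_r,C_b$ with $d_r,d_b>0$ and $f_r,f_b$ having a normal at every point, and a $C^1$ map $\varphi:[-\delta,\delta]\to[-\delta,\delta]$ with $f_r(t)=f_b(\varphi(t))$ for all $|t|\le\delta$. *)

theory Defs
  imports "HOL-Analysis.Analysis"
begin

definition xpt :: "real \<Rightarrow> real \<times> real" where
  "xpt t = (sin t, cos t)"

definition evec :: "real \<times> real" where
  "evec = (0, 1)"

definition Phi :: "real \<Rightarrow> real \<Rightarrow> real" where
  "Phi \<kappa> s = s - sqrt (\<kappa>\<^sup>2 - 1 + s\<^sup>2)"

text \<open>Outer unit normal of the curve rho(t) x(t); rho1 is the derivative of rho.\<close>
definition nu :: "(real \<Rightarrow> real) \<Rightarrow> (real \<Rightarrow> real) \<Rightarrow> real \<Rightarrow> real \<times> real" where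
  "nu rho rho1 t =
     (let r = rho t; r' = rho1 t; N = sqrt (r\<^sup>2 + r'\<^sup>2)
      in ((r * sin t - r' * cos t) / N, (r' * sin t + r * cos t) / N))"

definition mvec :: "real \<Rightarrow> (real \<Rightarrow> real) \<Rightarrow> (real \<Rightarrow> real) \<Rightarrow> real \<Rightarrow> real \<times> real" where
  "mvec n rho rho1 t =
     (1 / n) *\<^sub>R (xpt t - Phi n (xpt t \<bullet> nu rho rho1 t) *\<^sub>R nu rho rho1 t)"

definition dfun :: "real \<Rightarrow> real \<Rightarrow> (real \<Rightarrow> real) \<Rightarrow> (real \<Rightarrow> real) \<Rightarrow> real \<Rightarrow> real" where
  "dfun n C rho rho1 t = (C - rho t * (1 - cos t)) / (n - evec \<bullet> mvec n rho rho1 t)"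

definition ffun :: "real \<Rightarrow> real \<Rightarrow> (real \<Rightarrow> real) \<Rightarrow> (real \<Rightarrow> real) \<Rightarrow> real \<Rightarrow> real \<times> real" where
  "ffun n C rho rho1 t = rho t *\<^sub>R xpt t + dfun n C rho rho1 t *\<^sub>R mvec n rho rho1 t"

definition has_normal_on :: "(real \<Rightarrow> real \<times> real) \<Rightarrow> real set \<Rightarrow> bool" where
  "has_normal_on g S \<longleftrightarrow>
     (\<forall>t\<in>S. \<exists>v. (g has_vector_derivative v) (at t within S) \<and> v \<noteq> 0)"

definition Delta :: "real \<Rightarrow> real" where
  "Delta n = n / (n - 1)"

end

theory Submission
  imports Defs
begin

(*
  Along the colour-c curve the optical path length rho + n_c d_c - e.f_c is the constant C_c.
  Differentiating it, Snell's law on the lens surface rho x cancels the motion of the base point,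
  and what remains says that the tangent of f_c is orthogonal to n_c m_c - e.  Since f_r and
  f_b o phi trace the same curve, n_r m_r(t) - e and n_b m_b(phi t) - e are parallel.
  By Brouwer phi has a fixed point; there both colours are refracted from the same point into the
  same direction, which for n_r <> n_b is only possible on the axis: phi 0 = 0, rho'(0) = 0 and
  d_r(0) = d_b(0).  Differentiating f_r = f_b o phi and the parallelism at 0 gives two equations
  linear in phi'(0), involving k_0 and K = rho''(0) / rho(0).  Eliminating phi'(0) leaves
  (k_0 + 1) Delta_r Delta_b = K (Delta_r + Delta_b) - K^2, that is
  4 k_0 Delta_r Delta_b = (Delta_r - Delta_b)^2 - (2 K - Delta_r - Delta_b)^2.
*)

lemma has_real_derivative_norm:
  assumes "(g has_vector_derivative g') (at t within S)" "g t \<noteq> 0"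
  shows "((\<lambda>\<tau>. norm (g \<tau>)) has_real_derivative sgn (g t) \<bullet> g') (at t within S)"
proof -
  have "((\<lambda>\<tau>. norm (g \<tau>)) has_derivative (\<lambda>h. h * (sgn (g t) \<bullet> g'))) (at t within S)"
    using has_derivative_compose[OF assms(1)[unfolded has_vector_derivative_def]
        has_derivative_norm[OF assms(2)]]
    by (simp add: inner_commute)
  then show ?thesis
    unfolding has_field_derivative_def by (rule has_derivative_eq_rhs) (simp add: fun_eq_iff)
qed

lemma has_real_derivative_unique_interval:
  fixes f :: "real \<Rightarrow> real"
  assumes "a < b" "t \<in> {a..b}"
    and "(f has_real_derivative D) (at t within {a..b})" "(f has_real_derivative E) (at t within {a..b})"
  shows "D = E"
  using vector_derivative_unique_within_closed_interval[of a b t f D E] assms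
  by (simp add: has_real_derivative_iff_has_vector_derivative)

definition cross2 :: "real \<times> real \<Rightarrow> real \<times> real \<Rightarrow> real" where
  "cross2 u w = fst u * snd w - snd u * fst w"

lemma cross2_eq_0_if_common_orthogonal:
  assumes "u \<bullet> y = 0" "w \<bullet> y = 0" "y \<noteq> 0"
  shows "cross2 u w = 0"
proof -
  have "cross2 u w * fst y = snd w * (u \<bullet> y) - snd u * (w \<bullet> y)"
    and "cross2 u w * snd y = fst u * (w \<bullet> y) - fst w * (u \<bullet> y)"
    by (simp_all add: cross2_def inner_prod_def algebra_simps)
  then show ?thesis using assms by (auto simp: prod_eq_iff)
qed

lemma cross2_has_real_derivative:
  assumes "(u has_vector_derivative u') (at x)" "(w has_vector_derivative w') (at x)"
  shows "((\<lambda>t. cross2 (u t) (w t)) has_real_derivative cross2 u' (w x) + cross2 (u x) w') (at x)"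
proof -
  have fst: "((\<lambda>t. fst (f t)) has_real_derivative fst f') (at x)"
    and snd: "((\<lambda>t. snd (f t)) has_real_derivative snd f') (at x)"
    if "(f has_vector_derivative f') (at x)" for f :: "real \<Rightarrow> real \<times> real" and f'
    using bounded_linear.has_vector_derivative[OF bounded_linear_fst that]
      bounded_linear.has_vector_derivative[OF bounded_linear_snd that]
    by (simp_all add: has_real_derivative_iff_has_vector_derivative)
  show ?thesis
    unfolding cross2_def
    by (auto intro!: derivative_eq_intros fst snd assms simp: algebra_simps)
qed

lemma elimination_bound:
  fixes A B K k p :: real
  assumes "0 < A" "0 < B" "A \<noteq> B"
    and tangent: "k + 1 - K / A = (k + 1 - K / B) * p"
    and curvature: "A - K = (B - K) * p"
  shows "k \<le> (A - B)\<^sup>2 / (4 * A * B)"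
proof -
  have "((k + 1) * A - K) * B = ((k + 1) * B - K) * A * p"
    using tangent assms(1,2) by (simp add: field_simps)
  then have "((k + 1) * A - K) * B * (B - K) = ((k + 1) * B - K) * A * (A - K)"
    by (simp add: curvature mult.assoc)
  then have "(B - A) * ((k + 1) * A * B - K * (A + B) + K\<^sup>2) = 0"
    by (simp add: algebra_simps power2_eq_square)
  then have "(k + 1) * A * B - K * (A + B) + K\<^sup>2 = 0"
    using assms(3) by simp
  then have "4 * k * A * B = (A - B)\<^sup>2 - (2 * K - A - B)\<^sup>2"
    by (simp add: algebra_simps power2_eq_square)
  then have "4 * k * A * B \<le> (A - B)\<^sup>2"
    using zero_le_power2[of "2 * K - A - B"] by linarith
  then have "k * (4 * A * B) \<le> (A - B)\<^sup>2" by (simp add: mult_ac)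
  then show ?thesis using assms(1,2) by (simp add: pos_le_divide_eq)
qed

lemma norm_refract:
  fixes x \<nu> :: "'a::real_inner"
  assumes "norm x = 1" "norm \<nu> = 1" "1 < n"
  shows "norm ((1 / n) *\<^sub>R (x - Phi n (x \<bullet> \<nu>) *\<^sub>R \<nu>)) = 1"
proof -
  define s where "s = x \<bullet> \<nu>"
  define P where "P = Phi n s"
  have root: "(sqrt (n\<^sup>2 - 1 + s\<^sup>2))\<^sup>2 = n\<^sup>2 - 1 + s\<^sup>2"
    using assms(3) by (intro real_sqrt_pow2) (simp add: add_nonneg_nonneg one_less_power less_imp_le)
  have "(norm (x - P *\<^sub>R \<nu>))\<^sup>2 = x \<bullet> x - 2 * P * s + P\<^sup>2 * (\<nu> \<bullet> \<nu>)"
    unfolding power2_norm_eq_inner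
    by (simp add: inner_diff_left inner_diff_right inner_commute s_def power2_eq_square algebra_simps)
  also have "\<dots> = 1 + (P - s)\<^sup>2 - s\<^sup>2"
    using assms(1,2) by (simp add: norm_eq_1 power2_eq_square algebra_simps)
  also have "\<dots> = n\<^sup>2"
    using root by (simp add: P_def Phi_def)
  finally have "norm (x - P *\<^sub>R \<nu>) = n"
    using assms(3) by (simp add: power2_eq_iff_nonneg)
  then show ?thesis using assms(3) by (simp add: s_def P_def)
qed

lemma Phi_has_real_derivative:
  assumes "1 < n" shows "(Phi n has_real_derivative 1 - s / sqrt (n\<^sup>2 - 1 + s\<^sup>2)) (at s)"
proof -
  have "0 < n\<^sup>2 - 1 + s\<^sup>2" using assms by (simp add: add_pos_nonneg one_less_power)
  moreover have "((\<lambda>s. n\<^sup>2 - 1 + s\<^sup>2) has_real_derivative 2 * s) (at s)"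
    by (auto intro!: derivative_eq_intros)
  ultimately have "((\<lambda>s. sqrt (n\<^sup>2 - 1 + s\<^sup>2)) has_real_derivative
      inverse (sqrt (n\<^sup>2 - 1 + s\<^sup>2)) / 2 * (2 * s)) (at s)"
    by (rule DERIV_chain2[OF DERIV_real_sqrt])
  from DERIV_diff[OF DERIV_ident this] show ?thesis
    by (simp add: Phi_def[abs_def] field_simps)
qed

lemma evec_inner: "evec \<bullet> v = snd v"
  by (simp add: evec_def inner_prod_def)

lemma norm_xpt: "norm (xpt t) = 1"
  by (simp add: xpt_def norm_Pair)

lemma xpt_has_vector_derivative: "(xpt has_vector_derivative (cos t, - sin t)) (at t within S)"
  unfolding xpt_def[abs_def] has_real_derivative_iff_has_vector_derivative[symmetric]
  by (auto intro!: derivative_eq_intros has_vector_derivative_Pair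
      simp: has_real_derivative_iff_has_vector_derivative[symmetric])

definition speed :: "(real \<Rightarrow> real) \<Rightarrow> (real \<Rightarrow> real) \<Rightarrow> real \<Rightarrow> real" where
  "speed rho rho1 t = sqrt ((rho t)\<^sup>2 + (rho1 t)\<^sup>2)"

lemma speed_pos: "0 < rho t \<Longrightarrow> 0 < speed rho rho1 t"
  unfolding speed_def by (simp add: add_pos_nonneg)

lemma nu_eq: "nu rho rho1 t =
    ((rho t * sin t - rho1 t * cos t) / speed rho rho1 t,
     (rho1 t * sin t + rho t * cos t) / speed rho rho1 t)"
  by (simp add: nu_def Let_def speed_def)

lemma xpt_inner_nu: "xpt t \<bullet> nu rho rho1 t = rho t / speed rho rho1 t"
proof -
  have "sin t * (rho t * sin t - rho1 t * cos t) + cos t * (rho1 t * sin t + rho t * cos t) = rho t"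
    using sin_cos_squared_add[of t] by algebra
  then show ?thesis
    by (simp add: xpt_def nu_eq inner_prod_def add_divide_distrib[symmetric])
qed

lemma norm_nu: assumes "0 < rho t" shows "norm (nu rho rho1 t) = 1"
proof -
  have "(rho t * sin t - rho1 t * cos t)\<^sup>2 + (rho1 t * sin t + rho t * cos t)\<^sup>2
     = ((rho t)\<^sup>2 + (rho1 t)\<^sup>2) * ((sin t)\<^sup>2 + (cos t)\<^sup>2)"
    by algebra
  also have "\<dots> = (speed rho rho1 t)\<^sup>2"
    by (simp add: speed_def add_nonneg_nonneg)
  finally have "(rho t * sin t - rho1 t * cos t)\<^sup>2 + (rho1 t * sin t + rho t * cos t)\<^sup>2
     = (speed rho rho1 t)\<^sup>2" .
  then show ?thesis
    using speed_pos[of rho t rho1, OF assms]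
    by (simp add: nu_eq norm_Pair power_divide add_divide_distrib[symmetric])
qed

lemma norm_mvec: "1 < n \<Longrightarrow> 0 < rho t \<Longrightarrow> norm (mvec n rho rho1 t) = 1"
  unfolding mvec_def by (rule norm_refract) (simp_all add: norm_xpt norm_nu)

lemma snd_mvec_less: assumes "1 < n" "0 < rho t" shows "snd (mvec n rho rho1 t) < n"
  using norm_snd_le[of "snd (mvec n rho rho1 t)" "fst (mvec n rho rho1 t)"] norm_mvec[of n rho t rho1, OF assms]
  by (simp add: norm_commute) (use assms(1) in linarith)

lemma ffun_minus_eq:
  "ffun n C rho rho1 t - rho t *\<^sub>R xpt t = dfun n C rho rho1 t *\<^sub>R mvec n rho rho1 t"
  by (simp add: ffun_def)

lemma optical_path_length:
  assumes "1 < n" "0 < rho t" "0 < dfun n C rho rho1 t"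
  shows "rho t + n * norm (ffun n C rho rho1 t - rho t *\<^sub>R xpt t) - snd (ffun n C rho rho1 t) = C"
proof -
  let ?d = "dfun n C rho rho1 t" and ?m = "mvec n rho rho1 t"
  have "n - snd ?m \<noteq> 0" using snd_mvec_less[of n rho t rho1, OF assms(1,2)] by simp
  then have "?d * (n - snd ?m) = C - rho t * (1 - cos t)"
    by (simp add: dfun_def evec_inner)
  then show ?thesis
    using assms(3) norm_mvec[of n rho t rho1, OF assms(1,2)]
    by (simp add: ffun_minus_eq ffun_def xpt_def algebra_simps)
qed

lemma snell_tangent_identity:
  assumes "1 < n" "0 < rho t"
  shows "n * (mvec n rho rho1 t \<bullet> (rho1 t *\<^sub>R xpt t + rho t *\<^sub>R (cos t, - sin t))) = rho1 t"
proof -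
  let ?T = "rho1 t *\<^sub>R xpt t + rho t *\<^sub>R (cos t, - sin t)"
  have "nu rho rho1 t \<bullet> ?T = 0"
    by (simp add: nu_eq xpt_def inner_prod_def add_divide_distrib[symmetric] algebra_simps)
  moreover have "xpt t \<bullet> ?T = rho1 t"
  proof -
    have "sin t * (rho1 t * sin t + rho t * cos t) + cos t * (rho1 t * cos t - rho t * sin t)
        = rho1 t * ((sin t)\<^sup>2 + (cos t)\<^sup>2)"
      by algebra
    then show ?thesis by (simp add: xpt_def inner_prod_def algebra_simps)
  qed
  ultimately show ?thesis
    using assms(1) by (simp add: mvec_def inner_diff_left)
qed

(* Differentiate optical_path_length; snell_tangent_identity cancels the derivative of rho x. *)
lemma ffun_tangent_orthogonal:
  assumes n: "1 < n" and ab: "a < b" and t: "t \<in> {a..b}"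
    and pos: "\<forall>\<tau>\<in>{a..b}. 0 < rho \<tau>" "\<forall>\<tau>\<in>{a..b}. 0 < dfun n C rho rho1 \<tau>"
    and drho: "(rho has_real_derivative rho1 t) (at t within {a..b})"
    and df: "(ffun n C rho rho1 has_vector_derivative v) (at t within {a..b})"
  shows "(n *\<^sub>R mvec n rho rho1 t - evec) \<bullet> v = 0"
proof -
  let ?S = "{a..b}" and ?f = "ffun n C rho rho1" and ?m = "mvec n rho rho1 t"
  let ?T = "rho1 t *\<^sub>R xpt t + rho t *\<^sub>R (cos t, - sin t)"
  define g where "g \<tau> = ?f \<tau> - rho \<tau> *\<^sub>R xpt \<tau>" for \<tau>
  have rho_t: "0 < rho t" and d_t: "0 < dfun n C rho rho1 t" using pos t by auto
  have dg: "(g has_vector_derivative v - ?T) (at t within ?S)"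
    unfolding g_def using drho
    by (auto intro!: derivative_eq_intros df xpt_has_vector_derivative
        simp: has_real_derivative_iff_has_vector_derivative)
  have m: "norm ?m = 1" using norm_mvec[of n rho t rho1] n rho_t by simp
  have g_t: "g t = dfun n C rho rho1 t *\<^sub>R ?m" unfolding g_def by (rule ffun_minus_eq)
  then have "g t \<noteq> 0" "sgn (g t) = ?m" using d_t m by (auto simp: sgn_scaleR sgn_div_norm)
  then have "((\<lambda>\<tau>. norm (g \<tau>)) has_real_derivative ?m \<bullet> (v - ?T)) (at t within ?S)"
    using has_real_derivative_norm[OF dg] by simp
  moreover have "((\<lambda>\<tau>. snd (?f \<tau>)) has_real_derivative snd v) (at t within ?S)"
    using bounded_linear.has_vector_derivative[OF bounded_linear_snd df]
    by (simp add: has_real_derivative_iff_has_vector_derivative)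
  ultimately have "((\<lambda>\<tau>. rho \<tau> + n * norm (g \<tau>) - snd (?f \<tau>)) has_real_derivative
      rho1 t + n * (?m \<bullet> (v - ?T)) - snd v) (at t within ?S)"
    by (auto intro!: derivative_eq_intros drho)
  moreover have "((\<lambda>\<tau>. rho \<tau> + n * norm (g \<tau>) - snd (?f \<tau>)) has_real_derivative 0) (at t within ?S)"
    by (rule has_field_derivative_transform_within[OF DERIV_const[of C] zero_less_one t])
      (use pos n in \<open>auto simp: g_def optical_path_length\<close>)
  ultimately have "rho1 t + n * (?m \<bullet> (v - ?T)) - snd v = 0"
    by (rule has_real_derivative_unique_interval[OF ab t])
  then show ?thesis
    using snell_tangent_identity[of n rho t rho1] n rho_t
    by (simp add: inner_diff_left inner_diff_right evec_inner algebra_simps)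
qed

(* Two indices refract the same incoming ray into the same direction only along the normal. *)
lemma fixed_point_on_axis:
  assumes nr: "1 < nr" "nr < nb" and rho: "0 < rho t"
    and d: "0 < dfun nr Cr rho rho1 t" "0 < dfun nb Cb rho rho1 t"
    and meet: "ffun nr Cr rho rho1 t = ffun nb Cb rho rho1 t"
    and parallel: "cross2 (nr *\<^sub>R mvec nr rho rho1 t - evec) (nb *\<^sub>R mvec nb rho rho1 t - evec) = 0"
  shows "sin t = 0" "fst (nu rho rho1 t) = 0" "dfun nr Cr rho rho1 t = dfun nb Cb rho rho1 t"
proof -
  let ?dr = "dfun nr Cr rho rho1 t" and ?db = "dfun nb Cb rho rho1 t"
  let ?mr = "mvec nr rho rho1 t" and ?mb = "mvec nb rho rho1 t"
  have nb: "1 < nb" using nr by linarith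
  have eq: "?dr *\<^sub>R ?mr = ?db *\<^sub>R ?mb"
    using meet by (simp flip: ffun_minus_eq)
  then have "norm (?dr *\<^sub>R ?mr) = norm (?db *\<^sub>R ?mb)" by simp
  then show d_eq: "?dr = ?db"
    using d norm_mvec[of nr rho t rho1] norm_mvec[of nb rho t rho1] nr nb rho by simp
  then have m_eq: "?mr = ?mb" using eq d by simp
  have "cross2 (nr *\<^sub>R ?mr - evec) (nb *\<^sub>R ?mr - evec) = fst ?mr * (nb - nr)"
    by (simp add: cross2_def evec_def algebra_simps)
  then have "fst ?mr = 0" "fst ?mb = 0" using parallel m_eq nr by simp_all
  then have sin_r: "sin t = Phi nr (xpt t \<bullet> nu rho rho1 t) * fst (nu rho rho1 t)"
    and sin_b: "sin t = Phi nb (xpt t \<bullet> nu rho rho1 t) * fst (nu rho rho1 t)"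
    using nr nb by (simp_all add: mvec_def xpt_def)
  have "Phi nr s \<noteq> Phi nb s" for s
    using nr by (simp add: Phi_def power_strict_mono)
  with sin_r sin_b show nu_0: "fst (nu rho rho1 t) = 0"
    by (metis mult_cancel_right)
  with sin_r show "sin t = 0" by simp
qed

context
  fixes rho rho1 :: "real \<Rightarrow> real"
  assumes rho0: "0 < rho 0" and rho1_0: "rho1 0 = 0"
begin

lemma speed_at_zero: "speed rho rho1 0 = rho 0"
  using rho0 rho1_0 by (simp add: speed_def)

lemma nu_at_zero: "nu rho rho1 0 = (0, 1)"
  using rho0 rho1_0 by (simp add: nu_eq speed_at_zero)

lemma mvec_at_zero: "1 < n \<Longrightarrow> mvec n rho rho1 0 = (0, 1)"
  by (simp add: mvec_def xpt_inner_nu speed_at_zero nu_at_zero Phi_def xpt_def rho0)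

context
  fixes r2 :: real
  assumes drho: "(rho has_real_derivative 0) (at 0)"
    and drho1: "(rho1 has_real_derivative r2) (at 0)"
begin

lemma speed_has_derivative_at_zero: "(speed rho rho1 has_real_derivative 0) (at 0)"
proof -
  have pos: "0 < (rho 0)\<^sup>2 + (rho1 0)\<^sup>2" using rho0 rho1_0 by simp
  have "((\<lambda>t. (rho t)\<^sup>2 + (rho1 t)\<^sup>2) has_real_derivative 0) (at 0)"
    by (rule derivative_eq_intros drho drho1 refl)+ (simp add: rho1_0)
  from DERIV_chain2[OF DERIV_real_sqrt[OF pos] this] show ?thesis
    by (simp add: speed_def[abs_def])
qed

lemma nu_has_derivative_at_zero: "(nu rho rho1 has_vector_derivative (1 - r2 / rho 0, 0)) (at 0)"
proof -
  have "((\<lambda>t. (rho t * sin t - rho1 t * cos t) / speed rho rho1 t)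
      has_real_derivative 1 - r2 / rho 0) (at 0)"
    by (rule derivative_eq_intros drho drho1 speed_has_derivative_at_zero refl)+
      (use rho0 rho1_0 in \<open>simp_all add: speed_at_zero field_simps\<close>)
  moreover have "((\<lambda>t. (rho1 t * sin t + rho t * cos t) / speed rho rho1 t)
      has_real_derivative 0) (at 0)"
    by (rule derivative_eq_intros drho drho1 speed_has_derivative_at_zero refl)+
      (use rho0 rho1_0 in \<open>simp_all add: speed_at_zero field_simps\<close>)
  ultimately show ?thesis
    unfolding nu_eq[abs_def] has_real_derivative_iff_has_vector_derivative
    by (rule has_vector_derivative_Pair)
qed

lemma mvec_has_derivative_at_zero:
  assumes n: "1 < n"
  shows "(mvec n rho rho1 has_vector_derivative (1 - r2 / (rho 0 * Delta n), 0)) (at 0)"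
proof -
  have "((\<lambda>t. rho t / speed rho rho1 t) has_real_derivative 0) (at 0)"
    by (rule derivative_eq_intros drho speed_has_derivative_at_zero refl)+
      (use rho0 in \<open>simp_all add: speed_at_zero\<close>)
  from DERIV_chain2[OF Phi_has_real_derivative[OF n] this]
  have "((\<lambda>t. Phi n (rho t / speed rho rho1 t)) has_real_derivative 0) (at 0)"
    by simp
  then have "((\<lambda>t. (1 / n) *\<^sub>R (xpt t - Phi n (rho t / speed rho rho1 t) *\<^sub>R nu rho rho1 t))
      has_vector_derivative (1 / n) *\<^sub>R ((1, 0) - Phi n 1 *\<^sub>R (1 - r2 / rho 0, 0))) (at 0)"
    by (auto intro!: derivative_eq_intros xpt_has_vector_derivative nu_has_derivative_at_zero
        simp: speed_at_zero nu_at_zero less_imp_neq[OF rho0, symmetric])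
  moreover have "(1 / n) *\<^sub>R ((1, 0) - Phi n 1 *\<^sub>R (1 - r2 / rho 0, 0)) = (1 - r2 / (rho 0 * Delta n), 0)"
    using n rho0 by (simp add: Phi_def Delta_def field_simps)
  ultimately show ?thesis
    by (simp add: mvec_def[abs_def] xpt_inner_nu)
qed

lemma fst_ffun_has_derivative_at_zero:
  assumes n: "1 < n"
  shows "((\<lambda>t. fst (ffun n C rho rho1 t)) has_real_derivative
      rho 0 + dfun n C rho rho1 0 * (1 - r2 / (rho 0 * Delta n))) (at 0)"
proof -
  have m: "((\<lambda>t. fst (mvec n rho rho1 t)) has_real_derivative 1 - r2 / (rho 0 * Delta n)) (at 0)"
    "((\<lambda>t. snd (mvec n rho rho1 t)) has_real_derivative 0) (at 0)"
    using bounded_linear.has_vector_derivative[OF bounded_linear_fst mvec_has_derivative_at_zero[OF n]]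
      bounded_linear.has_vector_derivative[OF bounded_linear_snd mvec_has_derivative_at_zero[OF n]]
    by (simp_all add: has_real_derivative_iff_has_vector_derivative)
  have "fst (ffun n C rho rho1 t) = rho t * sin t
      + (C - rho t * (1 - cos t)) / (n - snd (mvec n rho rho1 t)) * fst (mvec n rho rho1 t)" for t
    by (simp add: ffun_def dfun_def evec_inner xpt_def)
  moreover have "((\<lambda>t. rho t * sin t
      + (C - rho t * (1 - cos t)) / (n - snd (mvec n rho rho1 t)) * fst (mvec n rho rho1 t))
      has_real_derivative rho 0 + dfun n C rho rho1 0 * (1 - r2 / (rho 0 * Delta n))) (at 0)"
    using n by (auto intro!: derivative_eq_intros drho m
        simp: mvec_at_zero dfun_def evec_inner)
  ultimately show ?thesis by simp
qed

end

end

locale problemB_local_solution =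
  fixes n_r n_b \<delta> C_r C_b :: real and rho rho1 \<phi> \<phi>1 :: "real \<Rightarrow> real"
  assumes n_order: "1 < n_r" "n_r < n_b"
    and delta: "0 < \<delta>" "\<delta> < pi / 2"
    and rho_pos: "\<forall>t\<in>{-\<delta>..\<delta>}. 0 < rho t"
    and rho_deriv: "\<forall>t\<in>{-\<delta>..\<delta>}. (rho has_real_derivative rho1 t) (at t within {-\<delta>..\<delta>})"
    and d_pos: "\<forall>t\<in>{-\<delta>..\<delta>}. 0 < dfun n_r C_r rho rho1 t"
               "\<forall>t\<in>{-\<delta>..\<delta>}. 0 < dfun n_b C_b rho rho1 t"
    and normals: "has_normal_on (ffun n_r C_r rho rho1) {-\<delta>..\<delta>}"
                 "has_normal_on (ffun n_b C_b rho rho1) {-\<delta>..\<delta>}"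
    and phi_maps: "\<forall>t\<in>{-\<delta>..\<delta>}. \<phi> t \<in> {-\<delta>..\<delta>}"
    and phi_deriv: "\<forall>t\<in>{-\<delta>..\<delta>}. (\<phi> has_real_derivative \<phi>1 t) (at t within {-\<delta>..\<delta>})"
    and match: "\<forall>t\<in>{-\<delta>..\<delta>}. ffun n_r C_r rho rho1 t = ffun n_b C_b rho rho1 (\<phi> t)"
begin

lemma n_b_gt_1: "1 < n_b"
  using n_order by linarith

lemma refracted_directions_parallel:
  assumes t: "t \<in> {-\<delta>..\<delta>}"
  shows "cross2 (n_r *\<^sub>R mvec n_r rho rho1 t - evec) (n_b *\<^sub>R mvec n_b rho rho1 (\<phi> t) - evec) = 0"
proof -
  let ?S = "{-\<delta>..\<delta>}"
  have \<phi>t: "\<phi> t \<in> ?S" using phi_maps t by blast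
  obtain v where v: "(ffun n_r C_r rho rho1 has_vector_derivative v) (at t within ?S)" "v \<noteq> 0"
    using normals(1) t unfolding has_normal_on_def by blast
  obtain w where w: "(ffun n_b C_b rho rho1 has_vector_derivative w) (at (\<phi> t) within ?S)"
    using normals(2) \<phi>t unfolding has_normal_on_def by blast
  have "(\<phi> has_vector_derivative \<phi>1 t) (at t within ?S)"
    using phi_deriv t by (simp add: has_real_derivative_iff_has_vector_derivative)
  moreover have "\<phi> ` ?S \<subseteq> ?S" using phi_maps by auto
  ultimately have "((ffun n_b C_b rho rho1 \<circ> \<phi>) has_vector_derivative \<phi>1 t *\<^sub>R w) (at t within ?S)"
    using vector_diff_chain_within has_vector_derivative_within_subset[OF w] by blast
  then have "(ffun n_r C_r rho rho1 has_vector_derivative \<phi>1 t *\<^sub>R w) (at t within ?S)"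
    by (rule has_vector_derivative_transform_within[OF _ zero_less_one t]) (use match in auto)
  then have v_eq: "v = \<phi>1 t *\<^sub>R w"
    using vector_derivative_unique_within_closed_interval[of "-\<delta>" \<delta> t] v(1) t delta(1)
    by simp
  have "(n_r *\<^sub>R mvec n_r rho rho1 t - evec) \<bullet> v = 0"
    by (rule ffun_tangent_orthogonal[OF n_order(1) _ t rho_pos d_pos(1)]) (use delta rho_deriv t v in auto)
  moreover have "(n_b *\<^sub>R mvec n_b rho rho1 (\<phi> t) - evec) \<bullet> w = 0"
    by (rule ffun_tangent_orthogonal[OF n_b_gt_1 _ \<phi>t rho_pos d_pos(2)]) (use delta rho_deriv \<phi>t w in auto)
  ultimately show ?thesis
    using v(2) by (intro cross2_eq_0_if_common_orthogonal) (auto simp: v_eq)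
qed

lemma fixed_point_at_origin:
  shows "\<phi> 0 = 0" "rho1 0 = 0" "dfun n_r C_r rho rho1 0 = dfun n_b C_b rho rho1 0"
proof -
  let ?S = "{-\<delta>..\<delta>}"
  have "continuous_on ?S \<phi>"
    by (rule DERIV_continuous_on) (use phi_deriv in auto)
  then obtain t0 where t0: "t0 \<in> ?S" "\<phi> t0 = t0"
    using brouwer[of ?S \<phi>] phi_maps delta(1) by auto
  then have "sin t0 = 0" "fst (nu rho rho1 t0) = 0"
    "dfun n_r C_r rho rho1 t0 = dfun n_b C_b rho rho1 t0"
    using fixed_point_on_axis[of n_r n_b rho t0 C_r rho1 C_b] n_order rho_pos d_pos match
      refracted_directions_parallel[OF t0(1)] by auto
  moreover have "t0 = 0"
    using sin_eq_0_pi[of t0] \<open>sin t0 = 0\<close> t0(1) delta by auto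
  moreover have "0 < speed rho rho1 0"
    using rho_pos delta(1) by (auto intro: speed_pos)
  ultimately show "\<phi> 0 = 0" "rho1 0 = 0" "dfun n_r C_r rho rho1 0 = dfun n_b C_b rho rho1 0"
    using t0(2) by (auto simp: nu_eq)
qed

lemma at_zero_within_domain: "at 0 within {-\<delta>..\<delta>} = at 0"
  using delta(1) by (intro at_within_interior) simp

lemma rho_has_derivative_at_zero: "(rho has_real_derivative 0) (at 0)"
proof -
  have "(rho has_real_derivative rho1 0) (at 0 within {-\<delta>..\<delta>})"
    using rho_deriv delta(1) by simp
  then show ?thesis by (simp add: at_zero_within_domain fixed_point_at_origin(2))
qed

lemma phi_has_derivative_at_zero: "(\<phi> has_real_derivative \<phi>1 0) (at 0)"
proof -
  have "(\<phi> has_real_derivative \<phi>1 0) (at 0 within {-\<delta>..\<delta>})"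
    using phi_deriv delta(1) by simp
  then show ?thesis by (simp add: at_zero_within_domain)
qed

lemma rho_zero_pos: "0 < rho 0"
  using rho_pos delta(1) by simp

lemmas rho_at_zero = rho_zero_pos fixed_point_at_origin(2)

context
  fixes r2 :: real
  assumes drho1: "(rho1 has_real_derivative r2) (at 0)"
begin

lemmas rho_derivatives_at_zero = rho_at_zero rho_has_derivative_at_zero drho1

lemma match_derivative_at_zero:
  defines "d0 \<equiv> dfun n_r C_r rho rho1 0" and "K \<equiv> r2 / rho 0"
  shows "rho 0 + d0 * (1 - K / Delta n_r) = (rho 0 + d0 * (1 - K / Delta n_b)) * \<phi>1 0"
proof -
  have "((\<lambda>t. fst (ffun n_r C_r rho rho1 t)) has_real_derivative
      rho 0 + d0 * (1 - K / Delta n_r)) (at 0)"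
    using fst_ffun_has_derivative_at_zero[of rho rho1, OF rho_derivatives_at_zero n_order(1)]
    by (simp add: d0_def K_def)
  moreover have "((\<lambda>t. fst (ffun n_b C_b rho rho1 t)) has_real_derivative
      rho 0 + d0 * (1 - K / Delta n_b)) (at (\<phi> 0))"
    using fst_ffun_has_derivative_at_zero[of rho rho1, OF rho_derivatives_at_zero n_b_gt_1]
    by (simp add: fixed_point_at_origin d0_def K_def)
  from DERIV_chain2[OF this phi_has_derivative_at_zero]
  have "((\<lambda>t. fst (ffun n_b C_b rho rho1 (\<phi> t))) has_real_derivative
      (rho 0 + d0 * (1 - K / Delta n_b)) * \<phi>1 0) (at 0)" .
  then have "((\<lambda>t. fst (ffun n_r C_r rho rho1 t)) has_real_derivative
      (rho 0 + d0 * (1 - K / Delta n_b)) * \<phi>1 0) (at 0)"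
    by (rule has_field_derivative_transform_within_open[of _ _ _ "{-\<delta><..<\<delta>}"])
      (use delta(1) match in auto)
  ultimately show ?thesis
    by (rule DERIV_unique)
qed

lemma parallel_derivative_at_zero:
  defines "K \<equiv> r2 / rho 0"
  shows "Delta n_r - K = (Delta n_b - K) * \<phi>1 0"
proof -
  let ?a = "\<lambda>n. 1 - K / Delta n"
  have scale: "n * ?a n = (n - 1) * (Delta n - K)" if "1 < n" for n
    using that by (simp add: Delta_def field_simps)
  have du: "((\<lambda>t. n_r *\<^sub>R mvec n_r rho rho1 t - evec)
      has_vector_derivative n_r *\<^sub>R (?a n_r, 0)) (at 0)"
    using mvec_has_derivative_at_zero[of rho rho1, OF rho_derivatives_at_zero n_order(1)]
    by (auto intro!: derivative_eq_intros simp: K_def)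
  have dw: "((\<lambda>t. n_b *\<^sub>R mvec n_b rho rho1 (\<phi> t) - evec) has_vector_derivative
      \<phi>1 0 *\<^sub>R n_b *\<^sub>R (?a n_b, 0)) (at 0)"
    using vector_diff_chain_at[OF phi_has_derivative_at_zero[unfolded has_real_derivative_iff_has_vector_derivative],
        of "mvec n_b rho rho1"] mvec_has_derivative_at_zero[of rho rho1, OF rho_derivatives_at_zero n_b_gt_1]
    by (auto intro!: derivative_eq_intros simp: K_def fixed_point_at_origin o_def)
  let ?G = "\<lambda>t. cross2 (n_r *\<^sub>R mvec n_r rho rho1 t - evec) (n_b *\<^sub>R mvec n_b rho rho1 (\<phi> t) - evec)"
  from cross2_has_real_derivative[OF du dw]
  have "(?G has_real_derivative n_r * ?a n_r * (n_b - 1) - (n_r - 1) * (\<phi>1 0 * (n_b * ?a n_b))) (at 0)"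
    using n_order(1) n_b_gt_1
    by (simp add: fixed_point_at_origin mvec_at_zero[of rho rho1, OF rho_at_zero] evec_def cross2_def)
  moreover have "(?G has_real_derivative 0) (at 0)"
    by (rule has_field_derivative_transform_within_open[OF DERIV_const, where S = "{-\<delta><..<\<delta>}"])
      (use delta(1) refracted_directions_parallel in auto)
  ultimately have "n_r * ?a n_r * (n_b - 1) = (n_r - 1) * (\<phi>1 0 * (n_b * ?a n_b))"
    using DERIV_unique by fastforce
  then have eq: "((n_r - 1) * (n_b - 1)) * (Delta n_r - K)
      = ((n_r - 1) * (n_b - 1)) * ((Delta n_b - K) * \<phi>1 0)"
    unfolding scale[OF n_order(1)] scale[OF n_b_gt_1] by algebra
  have "(n_r - 1) * (n_b - 1) \<noteq> 0"
    using n_order(1) n_b_gt_1 by simp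
  from mult_left_cancel[OF this] eq show ?thesis by blast
qed

lemma curvature_bound:
  "rho 0 / dfun n_r C_r rho rho1 0 \<le> (Delta n_r - Delta n_b)\<^sup>2 / (4 * Delta n_r * Delta n_b)"
proof (rule elimination_bound[OF _ _ _ _ parallel_derivative_at_zero])
  let ?d0 = "dfun n_r C_r rho rho1 0" and ?K = "r2 / rho 0"
  have "0 < ?d0" using d_pos(1) delta(1) by simp
  then show "rho 0 / ?d0 + 1 - ?K / Delta n_r = (rho 0 / ?d0 + 1 - ?K / Delta n_b) * \<phi>1 0"
    using match_derivative_at_zero by (simp add: field_simps)
  show "0 < Delta n_r" "0 < Delta n_b"
    using n_order(1) n_b_gt_1 by (simp_all add: Delta_def)
  show "Delta n_r \<noteq> Delta n_b"
    using n_order n_b_gt_1 by (simp add: Delta_def field_simps)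
qed

end

end

theorem corollary5p8:
  fixes n_r n_b \<delta> C_r C_b :: real
    and rho rho1 rho2 \<phi> \<phi>1 :: "real \<Rightarrow> real"
  assumes n_order: "1 < n_r" "n_r < n_b"
    and delta: "0 < \<delta>" "\<delta> < pi / 2"
    and rho_pos: "\<forall>t\<in>{-\<delta>..\<delta>}. 0 < rho t"
    and rho_C2: "\<forall>t\<in>{-\<delta>..\<delta>}. (rho has_real_derivative rho1 t) (at t within {-\<delta>..\<delta>})"
                "\<forall>t\<in>{-\<delta>..\<delta>}. (rho1 has_real_derivative rho2 t) (at t within {-\<delta>..\<delta>})"
                "continuous_on {-\<delta>..\<delta>} rho2"
    and d_pos: "\<forall>t\<in>{-\<delta>..\<delta>}. 0 < dfun n_r C_r rho rho1 t"
               "\<forall>t\<in>{-\<delta>..\<delta>}. 0 < dfun n_b C_b rho rho1 t"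
    and normals: "has_normal_on (ffun n_r C_r rho rho1) {-\<delta>..\<delta>}"
                 "has_normal_on (ffun n_b C_b rho rho1) {-\<delta>..\<delta>}"
    and phi_maps: "\<forall>t\<in>{-\<delta>..\<delta>}. \<phi> t \<in> {-\<delta>..\<delta>}"
    and phi_C1: "\<forall>t\<in>{-\<delta>..\<delta>}. (\<phi> has_real_derivative \<phi>1 t) (at t within {-\<delta>..\<delta>})"
                "continuous_on {-\<delta>..\<delta>} \<phi>1"
    and match: "\<forall>t\<in>{-\<delta>..\<delta>}. ffun n_r C_r rho rho1 t = ffun n_b C_b rho rho1 (\<phi> t)"
  shows "rho 0 / dfun n_r C_r rho rho1 0
           \<le> (Delta n_r - Delta n_b)\<^sup>2 / (4 * Delta n_r * Delta n_b)"
proof -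
  interpret problemB_local_solution n_r n_b \<delta> C_r C_b rho rho1 \<phi> \<phi>1
    by unfold_locales (fact n_order delta rho_pos rho_C2(1) d_pos normals phi_maps phi_C1(1) match)+
  have "(rho1 has_real_derivative rho2 0) (at 0 within {-\<delta>..\<delta>})"
    using rho_C2(2) delta(1) by simp
  then show ?thesis
    unfolding at_zero_within_domain by (rule curvature_bound)
qed

end
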